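(* Let $r\ge 2$ and $n\ge 3$, and let $\lambda$ be the word morphism on $\{E,N\}$ given by $\lambda(E)=E^{r-1}N$, $\lambda(N)=E^{r-2}N$, and $\theta$ the morphism given by $\theta(E)=E$, $\theta(N)=EN$. Then applying $\lambda$ to the Christoffel word of $\mathcal{D}_n$ yields the Christoffel word of $\mathcal{D}_{n+1}$, and applying $\theta\circ\lambda\circ\theta^{-1}$ to the Christoffel word of $\mathcal{C}_n$ yields the Christoffel word of $\mathcal{C}_{n+1}$.
   Context: Fix an integer $r\ge 2$. Define $c_1=0$, $c_2=1$, $c_n=rc_{n-1}-c_{n-2}$ for $n\ge 3$. For nonnegative integers $a,b$, the maximal Dyck path $\mathcal{P}(a,b)$ is the lattice path from $(0,0)$ to $(a,b)$ using unit north and east steps that never passes strictly above the line segment from $(0,0)$ to $(a,b)$ and is closest to that segment. For $n\ge 3$ let $\mathcal{C}_n=\mathcal{P}(c_{n-1},c_{n-2})$ and $\mathcal{D}_n=\mathcal{P}(c_{n-1}-c_{n-2},c_{n-2})$. The (lower) Christoffel word of such a path is the word over $\{E,N\}$ obtained by reading its steps from $(0,0)$ onward, recording $E$ for each east step and $N$ for each north step. The Christoffel word of $\mathcal{C}_n$ equals $\theta$ applied to the Christoffel word of $\mathcal{D}_n$; $\theta^{-1}$ denotes the inverse of $\theta$ on words in its image (replacing each factor $EN$ coming from an $N$ by $N$). *)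

theory Defs
  imports Main
begin

datatype letter = E | N

text \<open>The sequence c: c_1 = 0, c_2 = 1, c_n = r c_(n-1) - c_(n-2) (n >= 3).
  Index 0 is unused (set to 0).\<close>
fun cseq :: "nat \<Rightarrow> nat \<Rightarrow> int" where
  "cseq r 0 = 0"
| "cseq r (Suc 0) = 0"
| "cseq r (Suc (Suc 0)) = 1"
| "cseq r (Suc (Suc (Suc n))) = int r * cseq r (Suc (Suc n)) - cseq r (Suc n)"

text \<open>Endpoint of the lattice path encoded by a word over {E,N}, starting at (0,0).\<close>
definition xcoord :: "letter list \<Rightarrow> nat" where
  "xcoord w = length (filter (\<lambda>l. l = E) w)"
definition ycoord :: "letter list \<Rightarrow> nat" where
  "ycoord w = length (filter (\<lambda>l. l = N) w)"

text \<open>A lattice path from (0,0) to (a,b) never passing strictly above the segment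
  from (0,0) to (a,b): every vertex (x,y) satisfies a*y <= b*x.\<close>
definition below_path :: "nat \<Rightarrow> nat \<Rightarrow> letter list \<Rightarrow> bool" where
  "below_path a b w \<longleftrightarrow> xcoord w = a \<and> ycoord w = b \<and>
     (\<forall>k \<le> length w. a * ycoord (take k w) \<le> b * xcoord (take k w))"

definition path_below :: "letter list \<Rightarrow> letter list \<Rightarrow> bool" where
  "path_below w' w \<longleftrightarrow> (\<forall>k. ycoord (take k w') \<le> ycoord (take k w))"

text \<open>The maximal Dyck path P(a,b), given by its (lower Christoffel) word:
  the path below the segment that is closest to it, i.e. lies weakly above
  every other such path.\<close>
definition christoffel :: "nat \<Rightarrow> nat \<Rightarrow> letter list" where
  "christoffel a b = (THE w. below_path a b w \<and>
       (\<forall>w'. below_path a b w' \<longrightarrow> path_below w' w))"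

text \<open>Christoffel words of C_n = P(c_(n-1), c_(n-2)) and D_n = P(c_(n-1)-c_(n-2), c_(n-2)).\<close>
definition Cword :: "nat \<Rightarrow> nat \<Rightarrow> letter list" where
  "Cword r n = christoffel (nat (cseq r (n-1))) (nat (cseq r (n-2)))"
definition Dword :: "nat \<Rightarrow> nat \<Rightarrow> letter list" where
  "Dword r n = christoffel (nat (cseq r (n-1) - cseq r (n-2))) (nat (cseq r (n-2)))"

definition morph :: "(letter \<Rightarrow> letter list) \<Rightarrow> letter list \<Rightarrow> letter list" where
  "morph f w = concat (map f w)"

definition lam :: "nat \<Rightarrow> letter list \<Rightarrow> letter list" where
  "lam r = morph (\<lambda>l. case l of E \<Rightarrow> replicate (r-1) E @ [N] | N \<Rightarrow> replicate (r-2) E @ [N])"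

definition theta :: "letter list \<Rightarrow> letter list" where
  "theta = morph (\<lambda>l. case l of E \<Rightarrow> [E] | N \<Rightarrow> [E, N])"

definition theta_inv :: "letter list \<Rightarrow> letter list" where
  "theta_inv w = (THE u. theta u = w)"

end

theory Submission
  imports Defs
begin

(* For a + b > 0 the Christoffel word of (a, b) is the unique word w ending at (a, b) whose
   prefixes u all satisfy 0 <= b x(u) - a y(u) < a + b: on each antidiagonal x + y = k its
   vertex is the highest lattice point weakly below the segment.  The morphisms lambda and theta
   have unimodular letter-count matrices [[r-1, r-2], [1, 1]] and [[1, 1], [0, 1]], so
   b x - a y is invariant when (a, b) is moved by the same matrix, and since every letter image
   is E^i or E^i N, the vertices inside a letter image stay in the strip as well.  Hence both
   morphisms map Christoffel words to Christoffel words.  The matrix of lambda sends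
   (c_(n-1) - c_(n-2), c_(n-2)) to (c_n - c_(n-1), c_(n-1)), so D_(n+1) = lambda(D_n), and the
   matrix of theta sends it to (c_(n-1), c_(n-2)), so C_n = theta(D_n) and theta^-1 merely
   undoes theta. *)

lemma xcoord_simps [simp]:
  "xcoord [] = 0" "xcoord (E # u) = Suc (xcoord u)" "xcoord (N # u) = xcoord u"
  "xcoord (u @ v) = xcoord u + xcoord v" "xcoord (replicate k E) = k"
  by (auto simp: xcoord_def)

lemma ycoord_simps [simp]:
  "ycoord [] = 0" "ycoord (E # u) = ycoord u" "ycoord (N # u) = Suc (ycoord u)"
  "ycoord (u @ v) = ycoord u + ycoord v" "ycoord (replicate k E) = 0"
  by (auto simp: ycoord_def)

lemma length_eq_xcoord_plus_ycoord: "length w = xcoord w + ycoord w"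
proof (induction w)
  case (Cons l w)
  then show ?case by (cases l) auto
qed simp

definition gap :: "nat \<Rightarrow> nat \<Rightarrow> letter list \<Rightarrow> int" where
  "gap a b u = int b * int (xcoord u) - int a * int (ycoord u)"

definition in_strip :: "nat \<Rightarrow> nat \<Rightarrow> letter list \<Rightarrow> bool" where
  "in_strip a b u \<longleftrightarrow> 0 \<le> gap a b u \<and> gap a b u < int (a + b)"

definition strip_path :: "nat \<Rightarrow> nat \<Rightarrow> letter list \<Rightarrow> bool" where
  "strip_path a b w \<longleftrightarrow> (\<forall>k. in_strip a b (take k w))"

definition is_christoffel :: "nat \<Rightarrow> nat \<Rightarrow> letter list \<Rightarrow> bool" where
  "is_christoffel a b w \<longleftrightarrow> xcoord w = a \<and> ycoord w = b \<and> strip_path a b w"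

lemma is_christoffel_imp_below_path:
  assumes "is_christoffel a b w"
  shows "below_path a b w"
  unfolding below_path_def
proof (intro conjI allI impI)
  fix k
  have "0 \<le> gap a b (take k w)"
    using assms by (simp add: is_christoffel_def strip_path_def in_strip_def)
  then show "a * ycoord (take k w) \<le> b * xcoord (take k w)"
    by (simp add: gap_def) (metis of_nat_le_iff of_nat_mult)
qed (use assms in \<open>simp_all add: is_christoffel_def\<close>)

lemma below_path_path_below_christoffel:
  assumes w': "below_path a b w'" and w: "is_christoffel a b w"
  shows "path_below w' w"
  unfolding path_below_def
proof
  fix k
  have len_w': "length w' = a + b"
    using w' by (simp add: below_path_def length_eq_xcoord_plus_ycoord)
  have len_w: "length w = a + b"
    using w by (simp add: is_christoffel_def length_eq_xcoord_plus_ycoord)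
  show "ycoord (take k w') \<le> ycoord (take k w)"
  proof (cases "k \<le> a + b")
    case False
    then show ?thesis using len_w len_w' w w' by (simp add: below_path_def is_christoffel_def)
  next
    case True
    define x' y' x y where "x' = xcoord (take k w')" and "y' = ycoord (take k w')"
      and "x = xcoord (take k w)" and "y = ycoord (take k w)"
    have "x' + y' = x + y"
      using True len_w len_w' length_eq_xcoord_plus_ycoord[of "take k _"]
      unfolding x'_def y'_def x_def y_def by (metis length_take)
    moreover have "a * y' \<le> b * x'"
      using w' True len_w' unfolding below_path_def x'_def y'_def by auto
    moreover have "int b * int x - int a * int y < int (a + b)"
      using w unfolding is_christoffel_def strip_path_def in_strip_def gap_def x_def y_def by blast
    then have "\<not> a * y + a + b \<le> b * x"
      by (simp add: of_nat_le_iff[symmetric, where 'a = int])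
    \<comment> \<open>a vertex of w' above that of w on their antidiagonal forces b x - a y \<ge> a + b\<close>
    moreover have "a * (y + 1) + b * (x' + 1) \<le> a * y' + b * x" if "y < y'"
      using that \<open>x' + y' = x + y\<close> by (intro add_mono mult_left_mono) auto
    ultimately have "\<not> y < y'"
      by (auto simp: algebra_simps)
    then show ?thesis
      unfolding y'_def[symmetric] y_def[symmetric] by simp
  qed
qed

lemma path_below_antisym:
  assumes "length u = length v" "path_below u v" "path_below v u"
  shows "u = v"
proof (rule nth_equalityI)
  fix i assume "i < length u"
  then have "ycoord (take (Suc i) w) = ycoord (take i w) + ycoord [w ! i]"
    if "length w = length u" for w
    using that by (simp add: take_Suc_conv_app_nth)
  moreover have "ycoord (take j u) = ycoord (take j v)" for j
    using assms(2,3) by (simp add: path_below_def le_antisym)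
  ultimately have "ycoord [u ! i] = ycoord [v ! i]"
    using assms(1) by (metis add_left_cancel)
  then show "u ! i = v ! i"
    by (cases "u ! i"; cases "v ! i") auto
qed (fact assms(1))

lemma christoffel_eqI:
  assumes "is_christoffel a b w"
  shows "christoffel a b = w"
  unfolding christoffel_def
proof (rule the_equality)
  show "below_path a b w \<and> (\<forall>w'. below_path a b w' \<longrightarrow> path_below w' w)"
    using assms is_christoffel_imp_below_path below_path_path_below_christoffel by blast
next
  fix w'' assume w'': "below_path a b w'' \<and> (\<forall>w'. below_path a b w' \<longrightarrow> path_below w' w'')"
  have "length w'' = length w"
    using w'' assms by (simp add: below_path_def is_christoffel_def length_eq_xcoord_plus_ycoord)
  then show "w'' = w"
    using w'' assms is_christoffel_imp_below_path below_path_path_below_christoffel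
    by (metis path_below_antisym)
qed

lemma gap_append: "gap a b (u @ v) = gap a b u + gap a b v"
  by (simp add: gap_def algebra_simps)

lemma gap_unimodular_image:
  assumes "xcoord v = \<alpha> * xcoord u + \<beta> * ycoord u" "ycoord v = \<gamma> * xcoord u + \<delta> * ycoord u"
    and "\<alpha> * \<delta> = \<beta> * \<gamma> + 1"
  shows "gap (\<alpha> * a + \<beta> * b) (\<gamma> * a + \<delta> * b) v = gap a b u"
proof -
  have "int \<alpha> * int \<delta> - int \<beta> * int \<gamma> = 1"
    using assms(3) by (metis add_diff_cancel_left' of_nat_1 of_nat_add of_nat_mult)
  moreover have "gap (\<alpha> * a + \<beta> * b) (\<gamma> * a + \<delta> * b) v
      = (int \<alpha> * int \<delta> - int \<beta> * int \<gamma>) * gap a b u"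
    using assms(1,2) by (simp add: gap_def algebra_simps)
  ultimately show ?thesis by simp
qed

lemma gap_append_replicate_E: "gap a b (u @ replicate k E) = gap a b u + int k * int b"
  by (simp add: gap_def algebra_simps)

lemma in_strip_transfer:
  assumes "in_strip a b u" "a + b \<le> a' + b'" "gap a' b' v = gap a b u"
  shows "in_strip a' b' v"
  using assms unfolding in_strip_def by (smt (verit) of_nat_mono)

lemma strip_path_imp_in_strip: "strip_path a b w \<Longrightarrow> in_strip a b w"
  unfolding strip_path_def by (metis take_all order_refl)

lemma strip_path_append:
  "strip_path a b (u @ v) \<longleftrightarrow> strip_path a b u \<and> (\<forall>k. in_strip a b (u @ take k v))"
proof
  assume uv: "strip_path a b (u @ v)"
  have "in_strip a b (take k u)" for k
    using uv[unfolded strip_path_def, rule_format, of "min k (length u)"]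
    by (cases "k \<le> length u") (simp_all add: min_def)
  moreover have "in_strip a b (u @ take k v)" for k
    using uv[unfolded strip_path_def, rule_format, of "length u + k"] by simp
  ultimately show "strip_path a b u \<and> (\<forall>k. in_strip a b (u @ take k v))"
    by (simp add: strip_path_def)
next
  assume "strip_path a b u \<and> (\<forall>k. in_strip a b (u @ take k v))"
  then show "strip_path a b (u @ v)"
    unfolding strip_path_def
    by (metis (no_types) append_Nil2 diff_is_0_eq nle_le take_0 take_all take_append)
qed

lemma strip_path_hom:
  assumes hom: "\<And>u v. f (u @ v) = f u @ f v"
    and gap_f: "\<And>u. gap a' b' (f u) = gap a b u"
    and le: "a + b \<le> a' + b'"
    and letter: "\<And>u l k. in_strip a b u \<Longrightarrow> in_strip a b (u @ [l]) \<Longrightarrow>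
      0 < k \<Longrightarrow> k < length (f [l]) \<Longrightarrow> in_strip a' b' (f u @ take k (f [l]))"
    and "strip_path a b w"
  shows "strip_path a' b' (f w)"
  using \<open>strip_path a b w\<close>
proof (induction w rule: rev_induct)
  case Nil
  have "f [] = []" using hom[of "[]" "[]"] by simp
  moreover have "in_strip a b []" using Nil by (metis strip_path_def take_Nil)
  ultimately show ?case
    using in_strip_transfer[OF _ le] gap_f by (metis strip_path_def take_Nil)
next
  case (snoc l u)
  then have u: "strip_path a b u" "in_strip a b u" and ul: "in_strip a b (u @ [l])"
    by (simp_all add: strip_path_imp_in_strip strip_path_append[of a b u "[l]"])
  have "in_strip a' b' (f u @ take k (f [l]))" for k
  proof -
    consider "k = 0" | "0 < k" "k < length (f [l])" | "length (f [l]) \<le> k"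
      by linarith
    then show ?thesis
    proof cases
      case 1
      then show ?thesis using in_strip_transfer[OF u(2) le] gap_f by simp
    next
      case 2
      then show ?thesis using letter u(2) ul by blast
    next
      case 3
      then have "f u @ take k (f [l]) = f (u @ [l])" by (simp add: hom)
      then show ?thesis using in_strip_transfer[OF ul le] gap_f by simp
    qed
  qed
  then show ?case using snoc.IH u(1) hom by (simp add: strip_path_append)
qed

lemma lam_append: "lam r (u @ v) = lam r u @ lam r v"
  by (simp add: lam_def morph_def)

lemma lam_simps [simp]:
  "lam r [] = []"
  "lam r (E # w) = replicate (r - 1) E @ N # lam r w"
  "lam r (N # w) = replicate (r - 2) E @ N # lam r w"
  by (simp_all add: lam_def morph_def)

lemma xcoord_lam: "xcoord (lam (s + 2) w) = (s + 1) * xcoord w + s * ycoord w"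
proof (induction w)
  case (Cons l w)
  then show ?case by (cases l) simp_all
qed simp

lemma ycoord_lam: "ycoord (lam (s + 2) w) = xcoord w + ycoord w"
proof (induction w)
  case (Cons l w)
  then show ?case by (cases l) simp_all
qed simp

lemma gap_lam: "gap ((s + 1) * p + s * q) (p + q) (lam (s + 2) u) = gap p q u"
proof -
  have "gap ((s + 1) * p + s * q) (1 * p + 1 * q) (lam (s + 2) u) = gap p q u"
    by (rule gap_unimodular_image) (use xcoord_lam[of s u] ycoord_lam[of s u] in simp_all)
  then show ?thesis by simp
qed

lemma is_christoffel_lam:
  assumes "is_christoffel p q w"
  shows "is_christoffel ((s + 1) * p + s * q) (p + q) (lam (s + 2) w)"
proof -
  let ?a = "(s + 1) * p + s * q" and ?b = "p + q"
  have letter: "in_strip ?a ?b (lam (s + 2) u @ take k (lam (s + 2) [l]))"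
    if u: "in_strip p q u" and ul: "in_strip p q (u @ [l])"
      and "0 < k" and k: "k < length (lam (s + 2) [l])" for u l k
  proof -
    have bound: "gap p q u + int k * int (p + q) < int (?a + ?b)"
    proof (cases l)
      case E
      have "k \<le> s + 1"
        using k E by simp
      moreover have "gap p q u < int p"
        using ul E by (simp add: in_strip_def gap_append) (simp add: gap_def)
      moreover have "int k * int (p + q) \<le> int (s + 1) * int (p + q)"
        using \<open>k \<le> s + 1\<close> by (intro mult_right_mono) simp_all
      moreover have "int (?a + ?b) = int p + int (s + 1) * int (p + q)"
        by (simp add: algebra_simps)
      ultimately show ?thesis by linarith
    next
      case N
      then have "k \<le> s" and "gap p q u < int (p + q)"
        using k u by (simp_all add: in_strip_def)
      moreover have "int k * int (p + q) \<le> int s * int (p + q)"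
        using \<open>k \<le> s\<close> by (intro mult_right_mono) simp_all
      moreover have "int (?a + ?b) = int (p + q) + int s * int (p + q) + int p"
        by (simp add: algebra_simps)
      ultimately show ?thesis by linarith
    qed
    have "take k (lam (s + 2) [l]) = replicate k E"
      using k by (cases l) (simp_all del: replicate_Suc)
    then have "gap ?a ?b (lam (s + 2) u @ take k (lam (s + 2) [l]))
        = gap p q u + int k * int (p + q)"
      by (simp only: gap_append_replicate_E gap_lam)
    with bound u show ?thesis
      by (simp add: in_strip_def)
  qed
  have "strip_path ?a ?b (lam (s + 2) w)"
  proof (rule strip_path_hom[where f = "lam (s + 2)" and a = p and b = q and w = w])
    show "strip_path p q w"
      using assms by (simp add: is_christoffel_def)
  qed (fact lam_append, fact gap_lam, simp, fact letter)
  then show ?thesis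
    using assms xcoord_lam[of s w] ycoord_lam[of s w] by (simp add: is_christoffel_def)
qed

lemma theta_simps [simp]:
  "theta [] = []" "theta (E # w) = E # theta w" "theta (N # w) = E # N # theta w"
  by (simp_all add: theta_def morph_def)

lemma theta_append: "theta (u @ v) = theta u @ theta v"
  by (simp add: theta_def morph_def)

lemma xcoord_theta: "xcoord (theta w) = xcoord w + ycoord w"
proof (induction w)
  case (Cons l w)
  then show ?case by (cases l) simp_all
qed simp

lemma ycoord_theta: "ycoord (theta w) = ycoord w"
proof (induction w)
  case (Cons l w)
  then show ?case by (cases l) simp_all
qed simp

lemma gap_theta: "gap (p + q) q (theta u) = gap p q u"
proof -
  have "gap (1 * p + 1 * q) (0 * p + 1 * q) (theta u) = gap p q u"
    by (rule gap_unimodular_image) (simp_all add: xcoord_theta ycoord_theta)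
  then show ?thesis by simp
qed

lemma is_christoffel_theta:
  assumes "is_christoffel p q w"
  shows "is_christoffel (p + q) q (theta w)"
proof -
  have letter: "in_strip (p + q) q (theta u @ take k (theta [l]))"
    if u: "in_strip p q u" and "in_strip p q (u @ [l])" "0 < k" "k < length (theta [l])"
    for u l k
  proof -
    have "l = N"
      using that by (cases l) simp_all
    with that have "k = 1"
      by simp
    with \<open>l = N\<close> have "theta u @ take k (theta [l]) = theta u @ [E]"
      by simp
    moreover have "gap (p + q) q (theta u @ [E]) = gap p q u + int q"
      by (simp add: gap_append gap_theta) (simp add: gap_def)
    ultimately show ?thesis
      using u by (simp add: in_strip_def)
  qed
  have "strip_path (p + q) q (theta w)"
  proof (rule strip_path_hom[where f = theta and a = p and b = q and w = w])
    show "strip_path p q w"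
      using assms by (simp add: is_christoffel_def)
  qed (fact theta_append, fact gap_theta, simp, fact letter)
  then show ?thesis
    using assms by (simp add: is_christoffel_def xcoord_theta ycoord_theta)
qed

lemma theta_eq_Nil_iff [simp]: "theta u = [] \<longleftrightarrow> u = []"
proof (cases u)
  case (Cons l u')
  then show ?thesis by (cases l) simp_all
qed simp

lemma theta_neq_N_Cons [simp]: "theta u \<noteq> N # w"
proof (cases u)
  case (Cons l u')
  then show ?thesis by (cases l) simp_all
qed simp

lemma inj_theta: "inj theta"
proof (rule injI)
  show "theta u = theta v \<Longrightarrow> u = v" for u v
  proof (induction u arbitrary: v)
    case Nil
    then show ?case by (metis theta_eq_Nil_iff)
  next
    case (Cons l u)
    then obtain l' v' where "v = l' # v'"
      by (metis theta_eq_Nil_iff neq_Nil_conv)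
    with Cons show ?case
      by (cases l; cases l') (auto simp: theta_neq_N_Cons[THEN not_sym])
  qed
qed

lemma theta_inv_theta [simp]: "theta_inv (theta w) = w"
  unfolding theta_inv_def using inj_theta by (simp add: inj_eq)

lemma cseq_rec:
  assumes "3 \<le> n"
  shows "cseq r n = int r * cseq r (n - 1) - cseq r (n - 2)"
  using assms by (cases "(r, n)" rule: cseq.cases) simp_all

lemma cseq_nonneg_le_Suc:
  assumes "2 \<le> r"
  shows "0 \<le> cseq r n \<and> cseq r n \<le> cseq r (Suc n)"
proof (induction n)
  case (Suc n)
  then have nonneg: "0 \<le> cseq r (Suc n)" by simp
  show ?case
  proof (cases n)
    case (Suc m)
    have "cseq r (Suc m) \<le> cseq r (Suc n)"
      using Suc.IH \<open>n = Suc m\<close> by simp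
    moreover have "2 * cseq r (Suc n) \<le> int r * cseq r (Suc n)"
      using assms nonneg by (intro mult_right_mono) simp_all
    ultimately show ?thesis
      using nonneg \<open>n = Suc m\<close> by simp
  qed simp
qed simp

definition Dwidth :: "nat \<Rightarrow> nat \<Rightarrow> nat" where
  "Dwidth r n = nat (cseq r (n - 1) - cseq r (n - 2))"

definition Dheight :: "nat \<Rightarrow> nat \<Rightarrow> nat" where
  "Dheight r n = nat (cseq r (n - 2))"

lemma Dword_eq_christoffel: "Dword r n = christoffel (Dwidth r n) (Dheight r n)"
  by (simp add: Dword_def Dwidth_def Dheight_def)

lemma Cword_eq_christoffel:
  assumes "2 \<le> r" "2 \<le> n"
  shows "Cword r n = christoffel (Dwidth r n + Dheight r n) (Dheight r n)"
proof -
  have "0 \<le> cseq r (n - 2)" "cseq r (n - 2) \<le> cseq r (n - 1)"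
    using cseq_nonneg_le_Suc[OF assms(1), of "n - 2"] assms(2)
    by (simp_all add: Suc_diff_Suc numeral_2_eq_2)
  then have "cseq r (n - 1) = int (Dwidth r n + Dheight r n)"
    by (simp add: Dwidth_def Dheight_def)
  then have "nat (cseq r (n - 1)) = Dwidth r n + Dheight r n"
    by simp
  then show ?thesis
    by (simp add: Cword_def Dheight_def)
qed

lemma Dwidth_Dheight_Suc:
  assumes "3 \<le> n"
  shows "Dwidth (s + 2) (Suc n) = (s + 1) * Dwidth (s + 2) n + s * Dheight (s + 2) n"
    and "Dheight (s + 2) (Suc n) = Dwidth (s + 2) n + Dheight (s + 2) n"
proof -
  let ?c = "cseq (s + 2)"
  have mono: "0 \<le> ?c (n - 2)" "?c (n - 2) \<le> ?c (n - 1)"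
    using cseq_nonneg_le_Suc[of "s + 2" "n - 2"] assms
    by (simp_all add: Suc_diff_Suc numeral_2_eq_2)
  have "?c n - ?c (n - 1) = int (s + 1) * (?c (n - 1) - ?c (n - 2)) + int s * ?c (n - 2)"
    using cseq_rec[OF assms, of "s + 2"] by (simp add: algebra_simps)
  with mono show "Dwidth (s + 2) (Suc n) = (s + 1) * Dwidth (s + 2) n + s * Dheight (s + 2) n"
    unfolding Dwidth_def Dheight_def by (simp add: nat_mult_distrib nat_add_distrib)
  from mono show "Dheight (s + 2) (Suc n) = Dwidth (s + 2) n + Dheight (s + 2) n"
    unfolding Dwidth_def Dheight_def by (simp flip: nat_add_distrib)
qed

lemma is_christoffel_lam_Dparams:
  assumes "3 \<le> n" "is_christoffel (Dwidth (s + 2) n) (Dheight (s + 2) n) w"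
  shows "is_christoffel (Dwidth (s + 2) (Suc n)) (Dheight (s + 2) (Suc n)) (lam (s + 2) w)"
  using is_christoffel_lam[OF assms(2)] Dwidth_Dheight_Suc[OF assms(1)] by simp

lemma is_christoffel_Dword:
  assumes "3 \<le> n"
  shows "is_christoffel (Dwidth (s + 2) n) (Dheight (s + 2) n) (Dword (s + 2) n)"
  using assms
proof (induction n rule: nat_induct_at_least)
  case base
  have "is_christoffel 1 0 [E]"
    by (auto simp: is_christoffel_def strip_path_def in_strip_def gap_def take_Cons')
  moreover have "Dwidth (s + 2) 3 = 1" "Dheight (s + 2) 3 = 0"
    by (simp_all add: Dwidth_def Dheight_def numeral_eq_Suc)
  ultimately show ?case
    by (simp add: Dword_eq_christoffel christoffel_eqI)
next
  case (Suc n)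
  then have "is_christoffel (Dwidth (s + 2) (Suc n)) (Dheight (s + 2) (Suc n))
      (lam (s + 2) (Dword (s + 2) n))"
    by (intro is_christoffel_lam_Dparams)
  then show ?case
    by (simp add: Dword_eq_christoffel[of _ "Suc n"] christoffel_eqI)
qed

lemma lam_Dword:
  assumes "3 \<le> n"
  shows "lam (s + 2) (Dword (s + 2) n) = Dword (s + 2) (Suc n)"
  using christoffel_eqI[OF is_christoffel_lam_Dparams[OF assms is_christoffel_Dword[OF assms]]]
  by (simp add: Dword_eq_christoffel)

lemma Cword_eq_theta_Dword:
  assumes "3 \<le> n"
  shows "Cword (s + 2) n = theta (Dword (s + 2) n)"
  using christoffel_eqI[OF is_christoffel_theta[OF is_christoffel_Dword[OF assms]]] assms
  by (simp add: Cword_eq_christoffel)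

theorem mainTheorem3:
  fixes r n :: nat
  assumes "r \<ge> 2" and "n \<ge> 3"
  shows "lam r (Dword r n) = Dword r (n+1)
       \<and> theta (lam r (theta_inv (Cword r n))) = Cword r (n+1)"
proof -
  obtain s where r: "r = s + 2"
    using assms(1) by (metis add.commute le_Suc_ex)
  have "lam r (Dword r n) = Dword r (n + 1)"
    using lam_Dword[OF assms(2)] r by simp
  moreover have "Cword r k = theta (Dword r k)" if "3 \<le> k" for k
    using Cword_eq_theta_Dword[OF that] r by simp
  ultimately show ?thesis
    using assms(2) by simp
qed

end
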